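(* Let $h$ be the concatenation of two uniformly distributed $\ell$-bit streams, let $x$ be a uniformly distributed $\ell$-bit stream, and let $z$ be any $\ell$-bit stream. Then $$G(z\boxplus h\vdash x\boxplus h)_\ell=G(z,z\boxplus h\vdash x\boxplus h)_\ell=\left(\tfrac34\right)^\ell.$$
   Context: For $x\in\mathbb{Z}_2^\ell$ and $h=h^{(0)}::h^{(1)}$ with $h^{(0)},h^{(1)}\in\mathbb{Z}_2^\ell$, $(x\boxplus h)_i=h^{(x_i)}_i$. The random values $x,h^{(0)},h^{(1)}$ are independent of each other and of $z$. $G(\Xi\vdash\Theta)$ is the guessing chance: the maximal probability, over randomized guessing procedures, of outputting $\Theta$ on input $\Xi$, the probability over the random values, as a sequence in $\ell$ considered up to negligible difference. *)

theory Defs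
  imports "HOL-Probability.Probability"
begin

text \<open>Bit streams of length l are boolean lists of length l (True = 1).\<close>

definition bitstreams :: "nat \<Rightarrow> bool list pmf" where
  "bitstreams l = pmf_of_set {xs. length xs = l}"

text \<open>x boxplus h, where h = h0 @ h1 with h0, h1 of length (length x):
  the i-th bit is h1 ! i if x ! i, else h0 ! i.\<close>

definition boxplus :: "bool list \<Rightarrow> bool list \<Rightarrow> bool list" where
  "boxplus x h = map (\<lambda>i. if x ! i then h ! (length x + i) else h ! i) [0..<length x]"

definition random_values :: "bool list pmf \<Rightarrow> nat \<Rightarrow> (bool list \<times> bool list \<times> bool list) pmf" where
  "random_values Z l = do {
     z \<leftarrow> Z;
     x \<leftarrow> bitstreams l;
     h0 \<leftarrow> bitstreams l;
     h1 \<leftarrow> bitstreams l;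
     return_pmf (z, x, h0 @ h1) }"

text \<open>Guessing chance G(inp |- out): supremum over randomized guessing procedures f
  (maps from input to a distribution on outputs) of the success probability.\<close>

definition guess_chance :: "'r pmf \<Rightarrow> ('r \<Rightarrow> 'a) \<Rightarrow> ('r \<Rightarrow> 'b) \<Rightarrow> real" where
  "guess_chance R inp out =
     (SUP f :: 'a \<Rightarrow> 'b pmf.
        measure_pmf.prob (bind_pmf R (\<lambda>r. map_pmf (\<lambda>g. g = out r) (f (inp r)))) {True})"

end

theory Submission
  imports Defs
begin

text \<open>
  Bit by bit, the observation a = z \<boxplus> h and the target b = x \<boxplus> h are related as
  follows: if x_i = z_i then b_i = a_i and the unselected bit of h is free, while if x_i \<noteq> z_i
  then b_i is the other, uniform bit of h. Hence among the 8^l triples (x, h0, h1) exactly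
  3^(#{i. a_i = b_i}) \<le> 3^l produce a given pair (a, b), with equality on the diagonal a = b.
  Any guessing strategy therefore succeeds on at most 2^l \<cdot> 3^l of the 8^l triples, and
  guessing b = a attains this bound. Revealing z as well does not help, since all of this holds
  for each fixed z.
\<close>

definition bitlists :: "nat \<Rightarrow> bool list set" where
  "bitlists n = {xs. length xs = n}"

lemma finite_bitlists [simp]: "finite (bitlists n)"
  unfolding bitlists_def using finite_lists_length_eq[of "UNIV :: bool set" n] by simp

lemma card_bitlists [simp]: "card (bitlists n) = 2 ^ n"
  unfolding bitlists_def using card_lists_length_eq[of "UNIV :: bool set" n] by simp

lemma bitlists_not_empty [simp]: "bitlists n \<noteq> {}"
  using card_bitlists[of n] by (metis card.empty power_not_zero zero_neq_numeral)

lemma bitlists_0: "bitlists 0 = {[]}"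
  by (auto simp: bitlists_def)

lemma sum_bitlists_Suc:
  "(\<Sum>xs\<in>bitlists (Suc n). g xs) = (\<Sum>xs\<in>bitlists n. g (True # xs) + g (False # xs))"
proof -
  have "bitlists (Suc n) = Cons True ` bitlists n \<union> Cons False ` bitlists n"
    by (auto simp: bitlists_def length_Suc_conv image_iff)
  then show ?thesis
    by (simp only:) (subst sum.union_disjoint; auto simp: sum.reindex sum.distrib)
qed

fun select_bits :: "bool list \<Rightarrow> bool list \<Rightarrow> bool list \<Rightarrow> bool list" where
  "select_bits (x # xs) (a # h0) (b # h1) = (if x then b else a) # select_bits xs h0 h1"
| "select_bits _ _ _ = []"

lemma length_select_bits:
  "length (select_bits x h0 h1) = min (length x) (min (length h0) (length h1))"
  by (induction x h0 h1 rule: select_bits.induct) auto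

lemma nth_select_bits:
  "i < length x \<Longrightarrow> i < length h0 \<Longrightarrow> i < length h1 \<Longrightarrow>
    select_bits x h0 h1 ! i = (if x ! i then h1 ! i else h0 ! i)"
  by (induction x h0 h1 arbitrary: i rule: select_bits.induct) (auto simp: nth_Cons split: nat.splits)

lemma boxplus_append:
  "length h0 = length x \<Longrightarrow> length h1 = length x \<Longrightarrow> boxplus x (h0 @ h1) = select_bits x h0 h1"
  by (rule nth_equalityI) (auto simp: boxplus_def length_select_bits nth_select_bits nth_append)

definition fiber_count :: "nat \<Rightarrow> bool list \<Rightarrow> bool list \<Rightarrow> bool list \<Rightarrow> real" where
  "fiber_count n z a b = (\<Sum>x\<in>bitlists n. \<Sum>h0\<in>bitlists n. \<Sum>h1\<in>bitlists n.
     if select_bits z h0 h1 = a \<and> select_bits x h0 h1 = b then 1 else 0)"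

text \<open>Per coordinate, a pair of equal bits arises from 3 of the 8 choices of (x_i, h0_i, h1_i)
  and a pair of different bits from exactly one.\<close>

lemma fiber_count_Cons:
  "fiber_count (Suc n) (zi # z) (ai # a) (bi # b) = (if ai = bi then 3 else 1) * fiber_count n z a b"
  unfolding fiber_count_def sum_bitlists_Suc
  by (cases zi; cases ai; cases bi) (simp_all add: sum.distrib flip: sum_distrib_left)

lemma fiber_count_le:
  "length z = n \<Longrightarrow> length a = n \<Longrightarrow> length b = n \<Longrightarrow> fiber_count n z a b \<le> 3 ^ n"
proof (induction n arbitrary: z a b)
  case 0
  then show ?case by (simp add: fiber_count_def bitlists_0)
next
  case (Suc n)
  then obtain zi z' ai a' bi b' where "z = zi # z'" "a = ai # a'" "b = bi # b'"
    by (metis length_Suc_conv)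
  moreover have "0 \<le> fiber_count n z' a' b'"
    by (simp add: fiber_count_def sum_nonneg)
  moreover have "fiber_count n z' a' b' \<le> 3 ^ n"
    using Suc calculation by simp
  ultimately show ?case
    by (auto simp: fiber_count_Cons)
qed

lemma fiber_count_diagonal:
  "length z = n \<Longrightarrow> length a = n \<Longrightarrow> fiber_count n z a a = 3 ^ n"
proof (induction n arbitrary: z a)
  case 0
  then show ?case by (simp add: fiber_count_def bitlists_0)
next
  case (Suc n)
  then obtain zi z' ai a' where "z = zi # z'" "a = ai # a'"
    by (metis length_Suc_conv)
  with Suc show ?case by (simp add: fiber_count_Cons)
qed

lemma sum_comp_by_fibers:
  fixes g :: "'b \<Rightarrow> 'c::comm_semiring_1"
  assumes "finite A" "finite B" "f ` A \<subseteq> B"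
  shows "(\<Sum>t\<in>A. g (f t)) = (\<Sum>y\<in>B. g y * (\<Sum>t\<in>A. if f t = y then 1 else 0))"
proof -
  have "(\<Sum>y\<in>B. g y * (\<Sum>t\<in>A. if f t = y then 1 else 0)) = (\<Sum>t\<in>A. \<Sum>y\<in>B. if f t = y then g y else 0)"
    by (simp add: sum_distrib_left if_distrib cong: if_cong) (rule sum.swap)
  also have "\<dots> = (\<Sum>t\<in>A. g (f t))"
    using assms by (intro sum.cong refl) auto
  finally show ?thesis ..
qed

lemma sum_select_bits_by_fibers:
  assumes "length z = n"
  shows "(\<Sum>x\<in>bitlists n. \<Sum>h0\<in>bitlists n. \<Sum>h1\<in>bitlists n. q (select_bits z h0 h1) (select_bits x h0 h1))
       = (\<Sum>a\<in>bitlists n. \<Sum>b\<in>bitlists n. q a b * fiber_count n z a b)"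
proof -
  let ?T = "bitlists n \<times> bitlists n \<times> bitlists n"
  let ?obs = "\<lambda>(x, h0, h1). (select_bits z h0 h1, select_bits x h0 h1)"
  have "?obs ` ?T \<subseteq> bitlists n \<times> bitlists n"
    using assms by (auto simp: bitlists_def length_select_bits)
  from sum_comp_by_fibers[OF _ _ this, of "case_prod q"] show ?thesis
    by (simp add: fiber_count_def sum.cartesian_product split_def prod_eq_iff)
qed

lemma sum_select_bits_le:
  fixes q :: "bool list \<Rightarrow> bool list \<Rightarrow> real"
  assumes z: "length z = n" and nonneg: "\<And>a b. 0 \<le> q a b"
    and row_sum: "\<And>a. (\<Sum>b\<in>bitlists n. q a b) \<le> 1"
  shows "(\<Sum>x\<in>bitlists n. \<Sum>h0\<in>bitlists n. \<Sum>h1\<in>bitlists n.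
           q (select_bits z h0 h1) (select_bits x h0 h1)) \<le> 6 ^ n"
proof -
  have "(\<Sum>x\<in>bitlists n. \<Sum>h0\<in>bitlists n. \<Sum>h1\<in>bitlists n.
           q (select_bits z h0 h1) (select_bits x h0 h1))
      = (\<Sum>a\<in>bitlists n. \<Sum>b\<in>bitlists n. q a b * fiber_count n z a b)"
    using z by (rule sum_select_bits_by_fibers)
  also have "\<dots> \<le> (\<Sum>a\<in>bitlists n. (\<Sum>b\<in>bitlists n. q a b) * 3 ^ n)"
    unfolding sum_distrib_right using z nonneg
    by (intro sum_mono mult_left_mono fiber_count_le) (auto simp: bitlists_def)
  also have "\<dots> \<le> (\<Sum>a\<in>bitlists n. 3 ^ n)"
    using row_sum by (intro sum_mono) auto
  also have "\<dots> = 6 ^ n"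
    by (simp flip: power_mult_distrib)
  finally show ?thesis .
qed

lemma sum_select_bits_agree:
  assumes z: "length z = n"
  shows "(\<Sum>x\<in>bitlists n. \<Sum>h0\<in>bitlists n. \<Sum>h1\<in>bitlists n.
           of_bool (select_bits z h0 h1 = select_bits x h0 h1)) = (6 ^ n :: real)"
proof -
  have "(\<Sum>x\<in>bitlists n. \<Sum>h0\<in>bitlists n. \<Sum>h1\<in>bitlists n.
           of_bool (select_bits z h0 h1 = select_bits x h0 h1))
      = (\<Sum>a\<in>bitlists n. \<Sum>b\<in>bitlists n. of_bool (a = b) * fiber_count n z a b)"
    using z by (rule sum_select_bits_by_fibers)
  also have "\<dots> = (\<Sum>a\<in>bitlists n. fiber_count n z a a)"
    by (simp add: of_bool_def if_distrib[of "\<lambda>c. c * _"] cong: if_cong)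
  also have "\<dots> = (\<Sum>a\<in>bitlists n. 3 ^ n)"
    using z by (intro sum.cong refl fiber_count_diagonal) (auto simp: bitlists_def)
  also have "\<dots> = 6 ^ n"
    by (simp flip: power_mult_distrib)
  finally show ?thesis .
qed

definition success_prob :: "'r pmf \<Rightarrow> ('r \<Rightarrow> 'a) \<Rightarrow> ('r \<Rightarrow> 'b) \<Rightarrow> ('a \<Rightarrow> 'b pmf) \<Rightarrow> real" where
  "success_prob R inp out f =
     measure_pmf.prob (bind_pmf R (\<lambda>r. map_pmf (\<lambda>g. g = out r) (f (inp r)))) {True}"

lemma guess_chance_eqI:
  assumes "\<And>f. success_prob R inp out f \<le> c" and "success_prob R inp out f\<^sub>0 = c"
  shows "guess_chance R inp out = c"
proof -
  have "guess_chance R inp out = (SUP f. success_prob R inp out f)"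
    by (simp add: guess_chance_def success_prob_def)
  also have "\<dots> = c"
  proof (rule antisym)
    show "(SUP f. success_prob R inp out f) \<le> c"
      by (rule cSUP_least) (auto intro: assms(1))
    have "bdd_above (range (success_prob R inp out))"
      using assms(1) by (intro bdd_aboveI[of _ c]) auto
    then show "c \<le> (SUP f. success_prob R inp out f)"
      using cSUP_upper[of f\<^sub>0 UNIV "success_prob R inp out"] assms(2) by simp
  qed
  finally show ?thesis .
qed

lemma success_prob_random_values:
  "success_prob (random_values Z l) inp out f =
     (\<integral>z. (\<Sum>x\<in>bitlists l. \<Sum>h0\<in>bitlists l. \<Sum>h1\<in>bitlists l.
             pmf (f (inp (z, x, h0 @ h1))) (out (z, x, h0 @ h1))) / 8 ^ l \<partial>Z)"
proof -
  have "pmf (map_pmf (\<lambda>g. g = c) p) True = pmf p c" for c and p :: "'b pmf"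
    by (simp add: pmf_map vimage_def measure_pmf_single)
  moreover have "(2::real) ^ l * 2 ^ l * 2 ^ l = 8 ^ l"
    by (simp flip: power_mult_distrib)
  ultimately show ?thesis
    unfolding success_prob_def random_values_def bitlists_def[symmetric] bitstreams_def
      measure_pmf_single bind_assoc_pmf bind_return_pmf
    by (simp add: pmf_bind integral_pmf_of_set sum_divide_distrib)
qed

lemma guess_chance_boxplus:
  fixes g :: "bool list \<Rightarrow> bool list \<Rightarrow> 'a" and decode :: "'a \<Rightarrow> bool list"
  assumes Z: "set_pmf Z \<subseteq> bitlists l" and decode: "\<And>z a. decode (g z a) = a"
  shows "guess_chance (random_values Z l) (\<lambda>(z, x, h). g z (boxplus z h)) (\<lambda>(z, x, h). boxplus x h)
           = (3/4) ^ l" (is "guess_chance _ ?inp ?out = _")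
proof -
  define S where "S f z = (\<Sum>x\<in>bitlists l. \<Sum>h0\<in>bitlists l. \<Sum>h1\<in>bitlists l.
      pmf (f (g z (select_bits z h0 h1))) (select_bits x h0 h1))"
    for f :: "'a \<Rightarrow> bool list pmf" and z
  have success: "success_prob (random_values Z l) ?inp ?out f = (\<integral>z. S f z / 8 ^ l \<partial>Z)" for f
    unfolding success_prob_random_values using Z
    by (intro integral_cong_AE)
       (auto simp: AE_measure_pmf_iff S_def bitlists_def boxplus_append intro!: sum.cong)
  have integrable: "integrable Z h" for h :: "bool list \<Rightarrow> real"
    using Z by (intro integrable_measure_pmf_finite) (auto intro: finite_subset)
  have six_eighths: "(6::real) ^ l / 8 ^ l = (3/4) ^ l"
    by (simp flip: power_divide)
  show ?thesis
  proof (rule guess_chance_eqI)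
    fix f
    have row_sum: "sum (pmf p) (bitlists l) \<le> 1" for p :: "bool list pmf"
      using measure_pmf.prob_le_1[of p "bitlists l"] by (simp add: measure_measure_pmf_finite)
    have "S f z \<le> 6 ^ l" if "z \<in> bitlists l" for z
      unfolding S_def by (intro sum_select_bits_le row_sum) (use that in \<open>auto simp: bitlists_def\<close>)
    then show "success_prob (random_values Z l) ?inp ?out f \<le> (3/4) ^ l"
      unfolding success using Z
      by (intro measure_pmf.integral_le_const integrable)
         (auto simp: AE_measure_pmf_iff six_eighths[symmetric] intro!: divide_right_mono)
  next
    have "S (return_pmf \<circ> decode) z = 6 ^ l" if "z \<in> bitlists l" for z
      unfolding S_def using that decode sum_select_bits_agree[of z l]
      by (simp add: bitlists_def indicator_def)
    then have "(\<integral>z. S (return_pmf \<circ> decode) z / 8 ^ l \<partial>Z) = (\<integral>z. (3/4) ^ l \<partial>Z)"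
      using Z by (intro integral_cong_AE) (auto simp: AE_measure_pmf_iff six_eighths)
    then show "success_prob (random_values Z l) ?inp ?out (return_pmf \<circ> decode) = (3/4) ^ l"
      unfolding success by simp
  qed
qed

theorem proposition5p7:
  fixes l :: nat and Z :: "bool list pmf"
  assumes "set_pmf Z \<subseteq> {zs. length zs = l}"
  shows "guess_chance (random_values Z l) (\<lambda>(z, x, h). boxplus z h) (\<lambda>(z, x, h). boxplus x h)
           = (3/4) ^ l
         \<and> guess_chance (random_values Z l) (\<lambda>(z, x, h). (z, boxplus z h)) (\<lambda>(z, x, h). boxplus x h)
           = (3/4) ^ l"
proof -
  have Z: "set_pmf Z \<subseteq> bitlists l"
    using assms by (simp add: bitlists_def)
  show ?thesis
    using guess_chance_boxplus[OF Z, where g = "\<lambda>z a. a" and decode = id]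
      guess_chance_boxplus[OF Z, where g = Pair and decode = snd]
    by simp
qed

end
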